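(* There exists a countable poset $P$ such that the space $\mathrm{UF}(P)$ is Hausdorff but not regular.
   Context: A filter on a poset $(P,\le_P)$ is an upward closed subset in which any two elements have a common lower bound in the set; it is unbounded if there is no $r\in P$ with $r<_P p$ for all $p$ in it ($r<_Pp$ meaning $r\le_Pp$ and not $p\le_Pr$). $\mathrm{UF}(P)$ is the set of unbounded filters on $P$ with topology generated by the sets $N_p=\{F:p\in F\}$, $p\in P$. *)

theory Defs
  imports "HOL-Analysis.Analysis"
begin

definition poset_on :: "'a set \<Rightarrow> ('a \<Rightarrow> 'a \<Rightarrow> bool) \<Rightarrow> bool" where
  "poset_on P le \<longleftrightarrow>
     (\<forall>x\<in>P. le x x) \<and>
     (\<forall>x\<in>P. \<forall>y\<in>P. le x y \<and> le y x \<longrightarrow> x = y) \<and>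
     (\<forall>x\<in>P. \<forall>y\<in>P. \<forall>z\<in>P. le x y \<and> le y z \<longrightarrow> le x z)"

definition strict_le :: "('a \<Rightarrow> 'a \<Rightarrow> bool) \<Rightarrow> 'a \<Rightarrow> 'a \<Rightarrow> bool" where
  "strict_le le r p \<longleftrightarrow> le r p \<and> \<not> le p r"

definition is_filter :: "'a set \<Rightarrow> ('a \<Rightarrow> 'a \<Rightarrow> bool) \<Rightarrow> 'a set \<Rightarrow> bool" where
  "is_filter P le F \<longleftrightarrow>
     F \<subseteq> P \<and>
     (\<forall>p\<in>F. \<forall>q\<in>P. le p q \<longrightarrow> q \<in> F) \<and>
     (\<forall>p\<in>F. \<forall>q\<in>F. \<exists>r\<in>F. le r p \<and> le r q)"

definition unbounded_filter :: "'a set \<Rightarrow> ('a \<Rightarrow> 'a \<Rightarrow> bool) \<Rightarrow> 'a set \<Rightarrow> bool" where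
  "unbounded_filter P le F \<longleftrightarrow>
     is_filter P le F \<and> \<not> (\<exists>r\<in>P. \<forall>p\<in>F. strict_le le r p)"

definition UF :: "'a set \<Rightarrow> ('a \<Rightarrow> 'a \<Rightarrow> bool) \<Rightarrow> 'a set set" where
  "UF P le = {F. unbounded_filter P le F}"

definition UF_nbhd :: "'a set \<Rightarrow> ('a \<Rightarrow> 'a \<Rightarrow> bool) \<Rightarrow> 'a \<Rightarrow> 'a set set" where
  "UF_nbhd P le p = {F \<in> UF P le. p \<in> F}"

text \<open>Topology on UF(P) generated by the sets N_p (the whole space UF(P) is included so that
  the topspace is exactly UF(P)).\<close>
definition UF_topology :: "'a set \<Rightarrow> ('a \<Rightarrow> 'a \<Rightarrow> bool) \<Rightarrow> 'a set topology" where
  "UF_topology P le = topology_generated_by (insert (UF P le) (UF_nbhd P le ` P))"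

end

theory Submission
  imports Defs "HOL-Library.Nat_Bijection"
begin

text \<open>
  Take a descending chain \<open>a\<^sub>0 > a\<^sub>1 > \<dots>\<close>, for every \<open>n\<close> a further descending chain
  \<open>b\<^sub>n\<^sub>0 > b\<^sub>n\<^sub>1 > \<dots>\<close>, and minimal elements \<open>c\<^sub>n\<^sub>m\<close> lying below \<open>a\<^sub>0, \<dots>, a\<^sub>n\<close>
  and \<open>b\<^sub>n\<^sub>0, \<dots>, b\<^sub>n\<^sub>m\<close>. The unbounded filters are the chain \<open>A\<close> of all \<open>a\<^sub>k\<close>, the chains
  \<open>B\<^sub>n\<close> of all \<open>b\<^sub>n\<^sub>k\<close>, and the principal filters \<open>\<up>c\<^sub>n\<^sub>m\<close>. Any two of them contain points
  \<open>p\<close>, \<open>q\<close> that lie in no common unbounded filter, so \<open>N\<^sub>p\<close> and \<open>N\<^sub>q\<close> separate them.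
  But \<open>A\<close> cannot be separated from the closed set of filters avoiding \<open>a\<^sub>0\<close>: a basic
  neighbourhood \<open>N\<^bsub>a\<^sub>n\<^esub>\<close> of \<open>A\<close> and any basic neighbourhood \<open>N\<^bsub>b\<^sub>n\<^sub>m\<^esub>\<close> of \<open>B\<^sub>n\<close>
  both contain \<open>\<up>c\<^sub>n\<^sub>m\<close>.
\<close>

section \<open>Unbounded filters on a poset\<close>

lemma UF_subset: "G \<in> UF P le \<Longrightarrow> G \<subseteq> P"
  unfolding UF_def unbounded_filter_def is_filter_def by blast

lemma UF_upward_closed: "G \<in> UF P le \<Longrightarrow> p \<in> G \<Longrightarrow> q \<in> P \<Longrightarrow> le p q \<Longrightarrow> q \<in> G"
  unfolding UF_def unbounded_filter_def is_filter_def by blast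

lemma UF_directed:
  "G \<in> UF P le \<Longrightarrow> p \<in> G \<Longrightarrow> q \<in> G \<Longrightarrow> \<exists>r\<in>G. le r p \<and> le r q"
  unfolding UF_def unbounded_filter_def is_filter_def by blast

lemma UF_no_strict_lower_bound:
  "G \<in> UF P le \<Longrightarrow> r \<in> P \<Longrightarrow> \<exists>p\<in>G. \<not> strict_le le r p"
  unfolding UF_def unbounded_filter_def by blast

lemma UF_nonempty: "G \<in> UF P le \<Longrightarrow> P \<noteq> {} \<Longrightarrow> G \<noteq> {}"
  using UF_no_strict_lower_bound by fast

lemma UF_subset_upclosed:
  assumes "G \<in> UF P le" "x\<^sub>0 \<in> G"
    and "\<And>r. r \<in> G \<Longrightarrow> le r x\<^sub>0 \<Longrightarrow> r \<in> D"
    and "\<And>r x. r \<in> D \<Longrightarrow> x \<in> P \<Longrightarrow> le r x \<Longrightarrow> x \<in> D"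
  shows "G \<subseteq> D"
proof
  fix x assume "x \<in> G"
  then obtain r where "r \<in> G" "le r x" "le r x\<^sub>0"
    using UF_directed[OF assms(1) _ assms(2)] by blast
  then show "x \<in> D" using assms(3,4) UF_subset[OF assms(1)] \<open>x \<in> G\<close> by blast
qed

lemma range_chain_in_UF:
  fixes f :: "nat \<Rightarrow> 'a"
  assumes "range f \<subseteq> P"
    and "\<And>i j. j \<le> i \<Longrightarrow> le (f i) (f j)"
    and "\<And>i q. q \<in> P \<Longrightarrow> le (f i) q \<Longrightarrow> q \<in> range f"
    and "\<And>r. r \<in> P \<Longrightarrow> \<exists>i. \<not> le r (f i)"
  shows "range f \<in> UF P le"
  unfolding UF_def unbounded_filter_def is_filter_def strict_le_def
proof (intro CollectI conjI ballI impI notI)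
  fix p q assume "p \<in> range f" "q \<in> range f"
  then obtain i j where "p = f i" "q = f j" by blast
  then have "le (f (max i j)) p \<and> le (f (max i j)) q" using assms(2) by simp
  then show "\<exists>r\<in>range f. le r p \<and> le r q" by blast
next
  assume "\<exists>r\<in>P. \<forall>p\<in>range f. le r p \<and> \<not> le p r"
  then show False using assms(4) by blast
qed (use assms(1,3) in blast)+

lemma UF_eq_range_chain:
  fixes f :: "nat \<Rightarrow> 'a"
  assumes "G \<in> UF P le" "G \<subseteq> range f" "range f \<subseteq> P"
    and "\<And>i j. le (f i) (f j) \<longleftrightarrow> j \<le> i"
  shows "G = range f"
proof (rule ccontr)
  assume "G \<noteq> range f"
  then obtain j where "f j \<notin> G" using assms(2) by blast
  have "strict_le le (f j) p" if "p \<in> G" for p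
  proof -
    obtain i where "p = f i" using \<open>p \<in> G\<close> assms(2) by blast
    have "\<not> j \<le> i"
      using UF_upward_closed[OF assms(1) \<open>p \<in> G\<close>] \<open>f j \<notin> G\<close> \<open>p = f i\<close> assms(3,4) by blast
    then show ?thesis unfolding strict_le_def \<open>p = f i\<close> assms(4) by auto
  qed
  then show False using UF_no_strict_lower_bound[OF assms(1)] assms(3) by blast
qed

lemma upset_of_minimal_in_UF:
  assumes "poset_on P le" "r \<in> P" "\<And>s. s \<in> P \<Longrightarrow> le s r \<Longrightarrow> s = r"
  shows "{q \<in> P. le r q} \<in> UF P le"
proof -
  have "is_filter P le {q \<in> P. le r q}"
    using assms(1,2) unfolding is_filter_def poset_on_def by blast
  moreover have "le r r" using assms(1,2) unfolding poset_on_def by blast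
  then have "\<not> (\<exists>s\<in>P. \<forall>p\<in>{q \<in> P. le r q}. strict_le le s p)"
    using assms(2,3) unfolding strict_le_def by blast
  ultimately show ?thesis unfolding UF_def unbounded_filter_def by blast
qed

lemma UF_eq_upset_of_minimal:
  assumes "G \<in> UF P le" "r \<in> G" "\<And>s. s \<in> P \<Longrightarrow> le s r \<Longrightarrow> s = r"
  shows "G = {q \<in> P. le r q}"
proof
  show "G \<subseteq> {q \<in> P. le r q}"
    using UF_directed[OF assms(1) _ assms(2)] UF_subset[OF assms(1)] assms(3) by blast
  show "{q \<in> P. le r q} \<subseteq> G"
    using UF_upward_closed[OF assms(1,2)] by blast
qed

section \<open>The topology of \<open>UF(P)\<close>\<close>

lemma topspace_UF_topology: "topspace (UF_topology P le) = UF P le"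
  unfolding UF_topology_def topology_generated_by_topspace UF_nbhd_def by blast

lemma openin_UF_nbhd: "p \<in> P \<Longrightarrow> openin (UF_topology P le) (UF_nbhd P le p)"
  unfolding UF_topology_def by (intro topology_generated_by_Basis insertI2 imageI)

lemma UF_nbhd_antimono: "le r p \<Longrightarrow> p \<in> P \<Longrightarrow> UF_nbhd P le r \<subseteq> UF_nbhd P le p"
  unfolding UF_nbhd_def using UF_upward_closed[of _ P le r p] by blast

lemma openin_UF_topology_imp_nbhd:
  assumes "openin (UF_topology P le) U" "G \<in> U" "P \<noteq> {}"
  shows "\<exists>p\<in>G. UF_nbhd P le p \<subseteq> U"
proof -
  have "generate_topology_on (insert (UF P le) (UF_nbhd P le ` P)) U"
    using assms(1) unfolding UF_topology_def by (rule openin_topology_generated_by)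
  then have "\<forall>G\<in>U. G \<in> UF P le \<longrightarrow> (\<exists>p\<in>G. UF_nbhd P le p \<subseteq> U)"
  proof (induction rule: generate_topology_on.induct)
    case (Int U V)
    show ?case
    proof (intro ballI impI)
      fix G assume "G \<in> U \<inter> V" "G \<in> UF P le"
      then obtain p q where "p \<in> G" "UF_nbhd P le p \<subseteq> U" "q \<in> G" "UF_nbhd P le q \<subseteq> V"
        using Int.IH by blast
      moreover obtain r where "r \<in> G" "le r p" "le r q"
        using UF_directed[OF \<open>G \<in> UF P le\<close> \<open>p \<in> G\<close> \<open>q \<in> G\<close>] by blast
      moreover have "p \<in> P" "q \<in> P" using \<open>p \<in> G\<close> \<open>q \<in> G\<close> \<open>G \<in> UF P le\<close> UF_subset by blast+
      ultimately have "UF_nbhd P le r \<subseteq> U \<inter> V"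
        using UF_nbhd_antimono[of le r p] UF_nbhd_antimono[of le r q] by blast
      then show "\<exists>r\<in>G. UF_nbhd P le r \<subseteq> U \<inter> V" using \<open>r \<in> G\<close> by blast
    qed
  next
    case (UN K)
    then show ?case by blast
  next
    case (Basis U)
    then consider "U = UF P le" | p where "U = UF_nbhd P le p" by blast
    then show ?case
    proof cases
      case 1
      then show ?thesis using UF_nonempty assms(3) unfolding UF_nbhd_def by blast
    next
      case 2
      then show ?thesis unfolding UF_nbhd_def by blast
    qed
  qed simp
  moreover have "G \<in> UF P le"
    using openin_subset[OF assms(1)] assms(2) unfolding topspace_UF_topology by blast
  ultimately show ?thesis using assms(2) by blast
qed

definition UF_separated :: "'a set \<Rightarrow> ('a \<Rightarrow> 'a \<Rightarrow> bool) \<Rightarrow> 'a set \<Rightarrow> 'a set \<Rightarrow> bool" where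
  "UF_separated P le G H \<longleftrightarrow> (\<exists>p\<in>G. \<exists>q\<in>H. UF_nbhd P le p \<inter> UF_nbhd P le q = {})"

lemma UF_separated_sym: "UF_separated P le G H \<Longrightarrow> UF_separated P le H G"
  unfolding UF_separated_def by blast

lemma Hausdorff_space_UF_topologyI:
  assumes "\<And>G H. G \<in> UF P le \<Longrightarrow> H \<in> UF P le \<Longrightarrow> G \<noteq> H \<Longrightarrow> UF_separated P le G H"
  shows "Hausdorff_space (UF_topology P le)"
  unfolding Hausdorff_space_def topspace_UF_topology
proof (intro allI impI)
  fix G H assume "G \<in> UF P le \<and> H \<in> UF P le \<and> G \<noteq> H"
  then have "G \<in> UF P le" "H \<in> UF P le" "G \<noteq> H" by blast+
  then obtain p q where "p \<in> G" "q \<in> H" "UF_nbhd P le p \<inter> UF_nbhd P le q = {}"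
    using assms unfolding UF_separated_def by meson
  show "\<exists>U V. openin (UF_topology P le) U \<and> openin (UF_topology P le) V \<and>
      G \<in> U \<and> H \<in> V \<and> disjnt U V"
  proof (intro exI conjI)
    have "p \<in> P" "q \<in> P"
      using UF_subset \<open>p \<in> G\<close> \<open>q \<in> H\<close> \<open>G \<in> UF P le\<close> \<open>H \<in> UF P le\<close> by blast+
    then show "openin (UF_topology P le) (UF_nbhd P le p)" "openin (UF_topology P le) (UF_nbhd P le q)"
      by (simp_all add: openin_UF_nbhd)
    show "G \<in> UF_nbhd P le p" "H \<in> UF_nbhd P le q"
      using \<open>p \<in> G\<close> \<open>q \<in> H\<close> \<open>G \<in> UF P le\<close> \<open>H \<in> UF P le\<close> unfolding UF_nbhd_def by blast+
    show "disjnt (UF_nbhd P le p) (UF_nbhd P le q)"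
      using \<open>UF_nbhd P le p \<inter> UF_nbhd P le q = {}\<close> unfolding disjnt_def .
  qed
qed

lemma not_regular_space_UF_topologyI:
  assumes "F \<in> UF P le" "p\<^sub>0 \<in> F"
    and "\<And>p. p \<in> F \<Longrightarrow> \<exists>H\<in>UF P le. p\<^sub>0 \<notin> H \<and>
           (\<forall>q\<in>H. UF_nbhd P le p \<inter> UF_nbhd P le q \<noteq> {})"
  shows "\<not> regular_space (UF_topology P le)"
proof
  assume "regular_space (UF_topology P le)"
  have "P \<noteq> {}" "p\<^sub>0 \<in> P" using assms(1,2) UF_subset by blast+
  let ?C = "UF P le - UF_nbhd P le p\<^sub>0"
  have "closedin (UF_topology P le) ?C"
    using openin_UF_nbhd[OF \<open>p\<^sub>0 \<in> P\<close>]
    by (simp add: closedin_def topspace_UF_topology Diff_Diff_Int UF_nbhd_def Int_absorb1)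
  moreover have "F \<in> topspace (UF_topology P le) - ?C"
    using assms(1,2) unfolding topspace_UF_topology UF_nbhd_def by blast
  ultimately obtain U V where "openin (UF_topology P le) U" "openin (UF_topology P le) V"
    "F \<in> U" "?C \<subseteq> V" "disjnt U V"
    using \<open>regular_space (UF_topology P le)\<close> unfolding regular_space_def by meson
  then obtain p where "p \<in> F" "UF_nbhd P le p \<subseteq> U"
    using openin_UF_topology_imp_nbhd \<open>P \<noteq> {}\<close> by blast
  then obtain H where "H \<in> UF P le" "p\<^sub>0 \<notin> H"
    and meets: "\<forall>q\<in>H. UF_nbhd P le p \<inter> UF_nbhd P le q \<noteq> {}"
    using assms(3) by blast
  then have "H \<in> V" using \<open>?C \<subseteq> V\<close> unfolding UF_nbhd_def by blast
  then obtain q where "q \<in> H" "UF_nbhd P le q \<subseteq> V"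
    using openin_UF_topology_imp_nbhd \<open>openin (UF_topology P le) V\<close> \<open>P \<noteq> {}\<close> by blast
  then show False
    using meets \<open>UF_nbhd P le p \<subseteq> U\<close> \<open>disjnt U V\<close> unfolding disjnt_def by blast
qed

definition pt_a :: "nat \<Rightarrow> nat" where "pt_a n = 3 * n"
definition pt_b :: "nat \<Rightarrow> nat \<Rightarrow> nat" where "pt_b n m = 3 * prod_encode (n, m) + 1"
definition pt_c :: "nat \<Rightarrow> nat \<Rightarrow> nat" where "pt_c n m = 3 * prod_encode (n, m) + 2"

lemma pt_eq_iff [simp]:
  "pt_a n = pt_a k \<longleftrightarrow> n = k"
  "pt_b n m = pt_b k l \<longleftrightarrow> n = k \<and> m = l"
  "pt_c n m = pt_c k l \<longleftrightarrow> n = k \<and> m = l"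
  "pt_a n \<noteq> pt_b k l" "pt_b k l \<noteq> pt_a n"
  "pt_a n \<noteq> pt_c k l" "pt_c k l \<noteq> pt_a n"
  "pt_b n m \<noteq> pt_c k l" "pt_c k l \<noteq> pt_b n m"
  unfolding pt_a_def pt_b_def pt_c_def by (auto simp: prod_encode_eq) presburger+

definition ex_poset :: "nat set" where
  "ex_poset = range pt_a \<union> {pt_b n m |n m. True} \<union> {pt_c n m |n m. True}"

definition ex_le :: "nat \<Rightarrow> nat \<Rightarrow> bool" where
  "ex_le x y \<longleftrightarrow> (\<exists>n k. x = pt_a n \<and> y = pt_a k \<and> k \<le> n) \<or>
     (\<exists>n m k. x = pt_b n m \<and> y = pt_b n k \<and> k \<le> m) \<or>
     (\<exists>n m. x = pt_c n m \<and> (y = pt_c n m \<or> (\<exists>k\<le>n. y = pt_a k) \<or> (\<exists>k\<le>m. y = pt_b n k)))"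

lemma ex_le_pt_a_iff [simp]: "ex_le (pt_a n) y \<longleftrightarrow> (\<exists>k\<le>n. y = pt_a k)"
  unfolding ex_le_def by auto

lemma ex_le_pt_b_iff [simp]: "ex_le (pt_b n m) y \<longleftrightarrow> (\<exists>k\<le>m. y = pt_b n k)"
  unfolding ex_le_def by auto

lemma ex_le_pt_c_iff [simp]:
  "ex_le (pt_c n m) y \<longleftrightarrow> y = pt_c n m \<or> (\<exists>k\<le>n. y = pt_a k) \<or> (\<exists>k\<le>m. y = pt_b n k)"
  unfolding ex_le_def by auto

lemma ex_le_pt_c_right_iff [simp]: "ex_le x (pt_c n m) \<longleftrightarrow> x = pt_c n m"
  unfolding ex_le_def by auto

lemma pt_in_ex_poset [simp]: "pt_a n \<in> ex_poset" "pt_b n m \<in> ex_poset" "pt_c n m \<in> ex_poset"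
  unfolding ex_poset_def by auto

lemma ex_poset_cases [consumes 1, case_names a b c]:
  assumes "x \<in> ex_poset"
  obtains n where "x = pt_a n" | n m where "x = pt_b n m" | n m where "x = pt_c n m"
  using assms unfolding ex_poset_def by blast

lemma poset_on_ex_poset: "poset_on ex_poset ex_le"
  unfolding poset_on_def
proof (intro conjI ballI impI)
  fix x assume "x \<in> ex_poset"
  then show "ex_le x x" by (cases rule: ex_poset_cases) auto
next
  fix x y assume "x \<in> ex_poset" "ex_le x y \<and> ex_le y x"
  then show "x = y" by (cases rule: ex_poset_cases) auto
next
  fix x y z assume "x \<in> ex_poset" "ex_le x y \<and> ex_le y z"
  then show "ex_le x z" by (cases rule: ex_poset_cases) (auto, metis le_trans)
qed

definition filter_A :: "nat set" where "filter_A = range pt_a"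
definition filter_B :: "nat \<Rightarrow> nat set" where "filter_B n = range (pt_b n)"
definition filter_C :: "nat \<Rightarrow> nat \<Rightarrow> nat set" where
  "filter_C n m = {q \<in> ex_poset. ex_le (pt_c n m) q}"

lemma mem_filter_iff [simp]:
  "pt_a k \<in> filter_A" "pt_b n m \<notin> filter_A" "pt_c n m \<notin> filter_A"
  "pt_a k \<notin> filter_B n" "pt_b k m \<in> filter_B n \<longleftrightarrow> k = n" "pt_c k m \<notin> filter_B n"
  "pt_a k \<in> filter_C n m \<longleftrightarrow> k \<le> n" "pt_b k l \<in> filter_C n m \<longleftrightarrow> k = n \<and> l \<le> m"
  "pt_c k l \<in> filter_C n m \<longleftrightarrow> k = n \<and> l = m"
  unfolding filter_A_def filter_B_def filter_C_def by auto

lemma filter_A_in_UF: "filter_A \<in> UF ex_poset ex_le"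
  unfolding filter_A_def
proof (rule range_chain_in_UF)
  fix r assume "r \<in> ex_poset"
  then show "\<exists>i. \<not> ex_le r (pt_a i)"
  proof (cases rule: ex_poset_cases)
    case (a n)
    then show ?thesis by (intro exI[of _ "Suc n"]) auto
  next
    case (c n m)
    then show ?thesis by (intro exI[of _ "Suc n"]) auto
  qed auto
qed auto

lemma filter_B_in_UF: "filter_B n \<in> UF ex_poset ex_le"
  unfolding filter_B_def
proof (rule range_chain_in_UF)
  fix r assume "r \<in> ex_poset"
  then show "\<exists>i. \<not> ex_le r (pt_b n i)"
  proof (cases rule: ex_poset_cases)
    case (b k m)
    then show ?thesis by (intro exI[of _ "Suc m"]) auto
  next
    case (c k m)
    then show ?thesis by (intro exI[of _ "Suc m"]) auto
  qed auto
qed auto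

lemma filter_C_in_UF: "filter_C n m \<in> UF ex_poset ex_le"
  unfolding filter_C_def by (rule upset_of_minimal_in_UF[OF poset_on_ex_poset]) auto

lemma ex_UF_cases:
  assumes "G \<in> UF ex_poset ex_le"
  obtains "G = filter_A" | n where "G = filter_B n" | n m where "G = filter_C n m"
proof (cases "\<exists>n m. pt_c n m \<in> G")
  case True
  then obtain n m where "pt_c n m \<in> G" by blast
  then have "G = filter_C n m"
    unfolding filter_C_def by (rule UF_eq_upset_of_minimal[OF assms]) simp
  then show ?thesis by (rule that)
next
  case no_c: False
  have in_ex_poset: "x \<in> ex_poset" if "x \<in> G" for x
    using that UF_subset[OF assms] by blast
  show ?thesis
  proof (cases "\<exists>k. pt_a k \<in> G")
    case True
    then obtain k where "pt_a k \<in> G" by blast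
    then have "G \<subseteq> range pt_a"
    proof (rule UF_subset_upclosed[OF assms])
      fix r assume "r \<in> G" "ex_le r (pt_a k)"
      show "r \<in> range pt_a"
        using in_ex_poset[OF \<open>r \<in> G\<close>] \<open>ex_le r (pt_a k)\<close> \<open>r \<in> G\<close> no_c
        by (cases rule: ex_poset_cases) auto
    qed auto
    then have "G = filter_A"
      unfolding filter_A_def by (rule UF_eq_range_chain[OF assms]) auto
    then show ?thesis by (rule that)
  next
    case no_a: False
    obtain x\<^sub>0 where "x\<^sub>0 \<in> G" using UF_nonempty[OF assms] pt_in_ex_poset(1)[of 0] by blast
    obtain n m where "x\<^sub>0 = pt_b n m"
      using in_ex_poset[OF \<open>x\<^sub>0 \<in> G\<close>] \<open>x\<^sub>0 \<in> G\<close> no_a no_c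
      by (cases rule: ex_poset_cases) auto
    have "G \<subseteq> range (pt_b n)"
    proof (rule UF_subset_upclosed[OF assms \<open>x\<^sub>0 \<in> G\<close>])
      fix r assume "r \<in> G" "ex_le r x\<^sub>0"
      show "r \<in> range (pt_b n)"
        using in_ex_poset[OF \<open>r \<in> G\<close>] \<open>ex_le r x\<^sub>0\<close> \<open>r \<in> G\<close> no_a no_c \<open>x\<^sub>0 = pt_b n m\<close>
        by (cases rule: ex_poset_cases) auto
    qed auto
    then have "G = filter_B n"
      unfolding filter_B_def by (rule UF_eq_range_chain[OF assms]) auto
    then show ?thesis by (rule that)
  qed
qed

lemma separated_A_B: "UF_separated ex_poset ex_le filter_A (filter_B n)"
  unfolding UF_separated_def UF_nbhd_def
  by (intro bexI[of _ "pt_a (Suc n)"] bexI[of _ "pt_b n 0"]) (auto elim!: ex_UF_cases)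

lemma separated_A_C: "UF_separated ex_poset ex_le filter_A (filter_C n m)"
  unfolding UF_separated_def UF_nbhd_def
  by (intro bexI[of _ "pt_a (Suc n)"] bexI[of _ "pt_c n m"]) (auto elim!: ex_UF_cases)

lemma separated_B_B: "n \<noteq> k \<Longrightarrow> UF_separated ex_poset ex_le (filter_B n) (filter_B k)"
  unfolding UF_separated_def UF_nbhd_def
  by (intro bexI[of _ "pt_b n 0"] bexI[of _ "pt_b k 0"]) (auto elim!: ex_UF_cases)

lemma separated_B_C: "UF_separated ex_poset ex_le (filter_B n) (filter_C k m)"
  unfolding UF_separated_def UF_nbhd_def
  by (intro bexI[of _ "pt_b n (Suc m)"] bexI[of _ "pt_c k m"]) (auto elim!: ex_UF_cases)

lemma separated_C_C: "(n, m) \<noteq> (k, l) \<Longrightarrow> UF_separated ex_poset ex_le (filter_C n m) (filter_C k l)"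
  unfolding UF_separated_def UF_nbhd_def
  by (intro bexI[of _ "pt_c n m"] bexI[of _ "pt_c k l"]) (auto elim!: ex_UF_cases)

lemma ex_UF_separated:
  assumes "G \<in> UF ex_poset ex_le" "H \<in> UF ex_poset ex_le" "G \<noteq> H"
  shows "UF_separated ex_poset ex_le G H"
  using assms
  by (elim ex_UF_cases)
     (auto intro: separated_A_B separated_A_C separated_B_B separated_B_C separated_C_C
        UF_separated_sym[OF separated_A_B] UF_separated_sym[OF separated_A_C]
        UF_separated_sym[OF separated_B_C])

lemma filter_C_in_nbhds:
  "filter_C n m \<in> UF_nbhd ex_poset ex_le (pt_a n) \<inter> UF_nbhd ex_poset ex_le (pt_b n m)"
  unfolding UF_nbhd_def using filter_C_in_UF by simp

theorem corollary2p19: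
  shows "\<exists>(P :: nat set) (le :: nat \<Rightarrow> nat \<Rightarrow> bool).
           poset_on P le \<and>
           Hausdorff_space (UF_topology P le) \<and>
           \<not> regular_space (UF_topology P le)"
proof (intro exI conjI)
  show "poset_on ex_poset ex_le" by (rule poset_on_ex_poset)
  show "Hausdorff_space (UF_topology ex_poset ex_le)"
    by (rule Hausdorff_space_UF_topologyI) (rule ex_UF_separated)
  show "\<not> regular_space (UF_topology ex_poset ex_le)"
  proof (rule not_regular_space_UF_topologyI[OF filter_A_in_UF])
    show "pt_a 0 \<in> filter_A" by simp
    fix p assume "p \<in> filter_A"
    then obtain n where "p = pt_a n" unfolding filter_A_def by blast
    show "\<exists>H\<in>UF ex_poset ex_le. pt_a 0 \<notin> H \<and>
        (\<forall>q\<in>H. UF_nbhd ex_poset ex_le p \<inter> UF_nbhd ex_poset ex_le q \<noteq> {})"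
    proof (intro bexI[of _ "filter_B n"] conjI ballI)
      fix q assume "q \<in> filter_B n"
      then obtain m where "q = pt_b n m" unfolding filter_B_def by blast
      then show "UF_nbhd ex_poset ex_le p \<inter> UF_nbhd ex_poset ex_le q \<noteq> {}"
        using filter_C_in_nbhds \<open>p = pt_a n\<close> by blast
    qed (simp_all add: filter_B_in_UF)
  qed
qed

end
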